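(* Let $L/K$ be a nontrivial finite extension inside $\bar K$, and let $N$ be the unique intermediate field $K\subseteq N\subseteq L$ such that $L/N$ is Galois of degree $r_K(L)$. Suppose $L=K(\alpha)$ where $\alpha$ has minimal polynomial $f$ over $K$ with $r_K(f)=r$, and let $\alpha=\alpha_1,\alpha_2,\dots,\alpha_r$ be the roots of $f$ contained in $L$. Then $N=K(t_1,t_2,\dots,t_r)$, where $t_1,\dots,t_r$ are the elementary symmetric polynomials evaluated at $\alpha_1,\dots,\alpha_r$.
   Context: $K$ is a perfect field with a fixed algebraic closure $\bar K$. For an irreducible $f\in K[t]$ and a root $\alpha$, the cluster size $r_K(f)$ is the number of roots of $f$ lying in $K(\alpha)$; for $L=K(\alpha)$, $r_K(L)=r_K(f)$ (independent of the choice of primitive element; equals $|{\rm Aut}(L/K)|$). The existence and uniqueness of the intermediate field $N$ with $L/N$ Galois of degree $r_K(L)$ is known (it is $N=L^{{\rm Aut}(L/K)}$). *)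

theory Defs
  imports "HOL-Algebra.Generated_Fields" "HOL-Algebra.Algebraic_Closure" "HOL-Algebra.Finite_Extensions"
begin

text \<open>All fields live inside an ambient field R (the fixed algebraic closure of K);
  subfields are subsets of carrier R.\<close>

definition perfect_subfield :: "('a, 'b) ring_scheme \<Rightarrow> 'a set \<Rightarrow> bool" where
  "perfect_subfield R K \<longleftrightarrow>
     (\<forall>n::nat. n > 0 \<longrightarrow> add_pow R n \<one>\<^bsub>R\<^esub> \<noteq> \<zero>\<^bsub>R\<^esub>) \<or>
     (\<exists>p::nat. p > 0 \<and> add_pow R p \<one>\<^bsub>R\<^esub> = \<zero>\<^bsub>R\<^esub> \<and>
        (\<forall>n. 0 < n \<and> n < p \<longrightarrow> add_pow R n \<one>\<^bsub>R\<^esub> \<noteq> \<zero>\<^bsub>R\<^esub>) \<and>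
        (\<forall>x\<in>K. \<exists>y\<in>K. y [^]\<^bsub>R\<^esub> p = x))"

definition adjoin :: "('a, 'b) ring_scheme \<Rightarrow> 'a set \<Rightarrow> 'a set \<Rightarrow> 'a set" where
  "adjoin R K S = generate_field R (K \<union> S)"

definition rel_aut :: "('a, 'b) ring_scheme \<Rightarrow> 'a set \<Rightarrow> 'a set \<Rightarrow> ('a \<Rightarrow> 'a) set" where
  "rel_aut R L N = {\<sigma>. \<sigma> \<in> ring_hom (R\<lparr>carrier := L\<rparr>) (R\<lparr>carrier := L\<rparr>) \<and>
       bij_betw \<sigma> L L \<and> \<sigma> \<in> extensional L \<and> (\<forall>x\<in>N. \<sigma> x = x)}"

definition galois_ext :: "('a, 'b) ring_scheme \<Rightarrow> 'a set \<Rightarrow> 'a set \<Rightarrow> bool" where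
  "galois_ext R L N \<longleftrightarrow> subfield N R \<and> subfield L R \<and> N \<subseteq> L \<and>
     ring.finite_dimension R N L \<and>
     {x \<in> L. \<forall>\<sigma>\<in>rel_aut R L N. \<sigma> x = x} = N"

definition roots_in :: "('a, 'b) ring_scheme \<Rightarrow> 'a set \<Rightarrow> 'a \<Rightarrow> 'a set \<Rightarrow> 'a set" where
  "roots_in R K \<alpha> L = {\<beta> \<in> L. ring.eval R (ring.Irr R K \<alpha>) \<beta> = \<zero>\<^bsub>R\<^esub>}"

definition elem_sym :: "('a, 'b) ring_scheme \<Rightarrow> nat \<Rightarrow> 'a set \<Rightarrow> 'a" where
  "elem_sym R k S = finsum R (\<lambda>T. finprod R (\<lambda>x. x) T) {T. T \<subseteq> S \<and> card T = k}"

end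

theory Submission
  imports Defs
begin

text \<open>
  Let \<open>Z\<close> be the set of roots of \<open>f\<close> in \<open>L\<close> and \<open>F = K(t\<^sub>1, \<dots>, t\<^sub>r)\<close>.
  Every automorphism of \<open>L/N\<close> fixes the coefficients of \<open>f\<close>, hence permutes the finite set
  \<open>Z\<close> and fixes each \<open>t\<^sub>k\<close>; since \<open>L/N\<close> is Galois, \<open>F \<subseteq> N\<close>. Conversely, \<open>\<alpha>\<close> is a
  root of \<open>\<Prod>\<^sub>\<beta>\<^sub>\<in>\<^sub>Z (X - \<beta>)\<close>, whose coefficients are \<open>\<plusminus>t\<^sub>k \<in> F\<close> by Vieta's formula, so
  \<open>[L:F] = [F(\<alpha>):F] \<le> r = [L:N]\<close>, and the tower law \<open>[L:F] = [L:N][N:F]\<close> forces \<open>N = F\<close>.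
\<close>

section \<open>Elementary symmetric functions\<close>

lemma (in cring) subring_is_cring:
  assumes "subring L R"
  shows "cring (R\<lparr>carrier := L\<rparr>)"
  using subcring_iff subcringI' assms subringE(1) by blast

lemma (in cring) elem_sym_closed:
  assumes "A \<subseteq> carrier R"
  shows "elem_sym R k A \<in> carrier R"
  using assms unfolding elem_sym_def by (auto intro!: finsum_closed finprod_closed dest: subset_trans)

lemma (in cring) elem_sym_zero:
  assumes "finite S"
  shows "elem_sym R 0 S = \<one>"
proof -
  have "{T. T \<subseteq> S \<and> card T = 0} = {{}}"
    using assms by (auto dest: finite_subset)
  then show ?thesis
    by (simp add: elem_sym_def finsum_insert)
qed

lemma image_card_subsets:
  assumes "inj_on f A"
  shows "(`) f ` {T. T \<subseteq> A \<and> card T = k} = {U. U \<subseteq> f ` A \<and> card U = k}"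
proof
  show "(`) f ` {T. T \<subseteq> A \<and> card T = k} \<subseteq> {U. U \<subseteq> f ` A \<and> card U = k}"
    using assms by (auto simp: card_image inj_on_subset)
  show "{U. U \<subseteq> f ` A \<and> card U = k} \<subseteq> (`) f ` {T. T \<subseteq> A \<and> card T = k}"
  proof
    fix U assume U: "U \<in> {U. U \<subseteq> f ` A \<and> card U = k}"
    then obtain T where T: "T \<subseteq> A" "U = f ` T"
      by (auto simp: subset_image_iff)
    then have "card T = k"
      using U card_image[OF inj_on_subset[OF assms T(1)]] by simp
    then show "U \<in> (`) f ` {T. T \<subseteq> A \<and> card T = k}"
      using T by blast
  qed
qed

lemma (in ring_hom_cring) hom_elem_sym:
  assumes "A \<subseteq> carrier R" "inj_on h A"
  shows "h (elem_sym R k A) = elem_sym S k (h ` A)"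
proof -
  define C where "C = {T. T \<subseteq> A \<and> card T = k}"
  have prod_closed: "(\<Otimes>y\<in>T. y) \<in> carrier R" if "T \<in> C" for T
    using that assms(1) unfolding C_def by (intro R.finprod_closed) auto
  have img_closed: "h ` T \<subseteq> carrier S" if "T \<in> C" for T
    using that assms(1) hom_closed unfolding C_def by auto
  have "h (elem_sym R k A) = (\<Oplus>\<^bsub>S\<^esub>T\<in>C. h (\<Otimes>y\<in>T. y))"
    using prod_closed by (simp add: elem_sym_def C_def[symmetric] Pi_def comp_def)
  also have "\<dots> = (\<Oplus>\<^bsub>S\<^esub>T\<in>C. \<Otimes>\<^bsub>S\<^esub>y\<in>h ` T. y)"
  proof (intro S.finsum_cong')
    fix T assume "T \<in> C"
    then have T: "T \<subseteq> carrier R" "inj_on h T"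
      using assms unfolding C_def by (auto intro: inj_on_subset)
    have "h (\<Otimes>y\<in>T. y) = finprod S h T"
      using hom_finprod[of "\<lambda>y. y" T] T(1) by (auto simp: Pi_def comp_def)
    also have "\<dots> = (\<Otimes>\<^bsub>S\<^esub>y\<in>h ` T. y)"
    proof -
      have "(\<lambda>y. y) \<in> h ` T \<rightarrow> carrier S"
        using T(1) by auto
      then show ?thesis
        using S.finprod_reindex[OF _ T(2)] by simp
    qed
    finally show "h (\<Otimes>y\<in>T. y) = (\<Otimes>\<^bsub>S\<^esub>y\<in>h ` T. y)" .
  qed (use img_closed in \<open>auto intro: S.finprod_closed\<close>)
  also have "\<dots> = (\<Oplus>\<^bsub>S\<^esub>U\<in>(`) h ` C. \<Otimes>\<^bsub>S\<^esub>y\<in>U. y)"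
    using assms(2) img_closed
    by (subst S.finsum_reindex) (auto simp: C_def intro!: inj_on_image S.finprod_closed intro: inj_on_subset)
  also have "\<dots> = elem_sym S k (h ` A)"
    using assms(2) by (simp add: C_def image_card_subsets elem_sym_def)
  finally show ?thesis .
qed

lemma (in cring) finprod_subring:
  assumes "subring L R" "f \<in> A \<rightarrow> L"
  shows "finprod (R\<lparr>carrier := L\<rparr>) f A = finprod R f A"
proof -
  interpret L: cring "R\<lparr>carrier := L\<rparr>"
    using subring_is_cring[OF assms(1)] .
  show ?thesis
    using assms(2)
  proof (induction A rule: infinite_finite_induct)
    case (insert a A)
    then have "f \<in> A \<rightarrow> carrier R" "f a \<in> carrier R"
      using subringE(1)[OF assms(1)] by auto
    with insert show ?case
      by (simp add: L.finprod_insert finprod_insert)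
  qed simp_all
qed

lemma (in cring) finsum_subring:
  assumes "subring L R" "f \<in> A \<rightarrow> L"
  shows "finsum (R\<lparr>carrier := L\<rparr>) f A = finsum R f A"
proof -
  interpret L: cring "R\<lparr>carrier := L\<rparr>"
    using subring_is_cring[OF assms(1)] .
  show ?thesis
    using assms(2)
  proof (induction A rule: infinite_finite_induct)
    case (insert a A)
    then have "f \<in> A \<rightarrow> carrier R" "f a \<in> carrier R"
      using subringE(1)[OF assms(1)] by auto
    with insert show ?case
      by (simp add: L.finsum_insert finsum_insert)
  qed simp_all
qed

lemma (in cring) elem_sym_subring:
  assumes "subring L R" "A \<subseteq> L"
  shows "elem_sym (R\<lparr>carrier := L\<rparr>) k A = elem_sym R k A"
proof -
  interpret L: cring "R\<lparr>carrier := L\<rparr>"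
    using subring_is_cring[OF assms(1)] .
  have prod_eq: "finprod (R\<lparr>carrier := L\<rparr>) (\<lambda>x. x) T = finprod R (\<lambda>x. x) T" if "T \<subseteq> A" for T
    using that assms by (intro finprod_subring) auto
  have prod_closed: "finprod R (\<lambda>x. x) T \<in> L" if "T \<subseteq> A" for T
    using that assms L.finprod_closed[of "\<lambda>x. x" T] prod_eq[OF that] by auto
  have "elem_sym (R\<lparr>carrier := L\<rparr>) k A = finsum (R\<lparr>carrier := L\<rparr>) (finprod R (\<lambda>x. x)) {T. T \<subseteq> A \<and> card T = k}"
    using prod_eq prod_closed unfolding elem_sym_def by (intro L.finsum_cong') auto
  also have "\<dots> = elem_sym R k A"
    using prod_closed unfolding elem_sym_def
    by (intro finsum_subring[OF assms(1)]) auto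
  finally show ?thesis .
qed

section \<open>Vieta's formula\<close>

lemma (in abelian_monoid) finsum_Pow_insert:
  assumes "finite S" "b \<notin> S" "f \<in> Pow (insert b S) \<rightarrow> carrier G"
  shows "(\<Oplus>T\<in>Pow (insert b S). f T) = (\<Oplus>T\<in>Pow S. f T) \<oplus> (\<Oplus>T\<in>Pow S. f (insert b T))"
proof -
  have "inj_on (insert b) (Pow S)"
    using assms(2) by (intro inj_onI) (metis PowD insert_ident subset_iff)
  moreover have "Pow S \<inter> insert b ` Pow S = {}"
    using assms(2) by auto
  ultimately show ?thesis
    using assms by (simp add: Pow_insert finsum_Un_disjoint finsum_reindex Pi_def)
qed

lemma (in cring) finprod_minus_eq_finsum_Pow:
  assumes "finite S" "S \<subseteq> carrier R" "x \<in> carrier R"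
  shows "(\<Otimes>b\<in>S. x \<ominus> b) =
    (\<Oplus>T\<in>Pow S. ((\<ominus>\<one>) [^] card T \<otimes> (\<Otimes>y\<in>T. y)) \<otimes> x [^] (card S - card T))"
  using assms(1,2)
proof (induction S rule: finite_induct)
  case empty
  then show ?case by simp
next
  case (insert b S)
  define t where "t = (\<lambda>(S'::'a set) T. ((\<ominus>\<one>) [^] card T \<otimes> (\<Otimes>y\<in>T. y)) \<otimes> x [^] (card S' - card T))"
  have b: "b \<in> carrier R" and S: "S \<subseteq> carrier R"
    using insert.prems by auto
  have t_closed: "t S' T \<in> carrier R" if "T \<subseteq> carrier R" for S' T
    using that assms(3) unfolding t_def by (intro m_closed finprod_closed) auto
  have prod_closed: "(\<Otimes>y\<in>T. y) \<in> carrier R" if "T \<subseteq> S" for T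
    using that S by (intro finprod_closed) auto
  have t_keep: "t (insert b S) T = x \<otimes> t S T" if "T \<subseteq> S" for T
    using that insert.hyps card_mono[OF insert.hyps(1) that] prod_closed[OF that] assms(3)
    by (simp add: t_def m_ac Suc_diff_le)
  have t_add: "t (insert b S) (insert b T) = \<ominus> b \<otimes> t S T" if "T \<subseteq> S" for T
  proof -
    have "finite T" "b \<notin> T"
      using that insert.hyps finite_subset by auto
    then show ?thesis
      using that S b prod_closed[OF that] assms(3) insert.hyps
      by (simp add: t_def m_ac l_minus r_minus finprod_insert subset_iff)
  qed
  have sum_closed: "(\<Oplus>T\<in>Pow S. t S T) \<in> carrier R"
    using S t_closed by (auto intro: finsum_closed)
  have "(\<Oplus>T\<in>Pow (insert b S). t (insert b S) T)
      = (\<Oplus>T\<in>Pow S. t (insert b S) T) \<oplus> (\<Oplus>T\<in>Pow S. t (insert b S) (insert b T))"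
    using insert.hyps insert.prems t_closed by (intro finsum_Pow_insert) auto
  also have "\<dots> = (\<Oplus>T\<in>Pow S. x \<otimes> t S T) \<oplus> (\<Oplus>T\<in>Pow S. \<ominus> b \<otimes> t S T)"
    using S b assms(3) t_closed t_keep t_add
    by (intro arg_cong2[where f="(\<oplus>)"] finsum_cong') (auto dest: subset_trans)
  also have "\<dots> = x \<otimes> (\<Oplus>T\<in>Pow S. t S T) \<oplus> \<ominus> b \<otimes> (\<Oplus>T\<in>Pow S. t S T)"
    using S b assms(3) t_closed insert.hyps by (simp add: finsum_rdistr Pi_def subset_trans)
  also have "\<dots> = (x \<ominus> b) \<otimes> (\<Oplus>T\<in>Pow S. t S T)"
    using b assms(3) sum_closed by (simp add: a_minus_def l_distr)
  also have "\<dots> = (\<Otimes>b\<in>insert b S. x \<ominus> b)"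
    using insert.IH[OF S] insert.hyps S b assms(3) by (subst finprod_insert) (auto simp: t_def)
  finally show ?case
    by (simp add: t_def)
qed

lemma (in abelian_monoid) finsum_Pow_by_card:
  assumes "finite S" "\<And>T. T \<subseteq> S \<Longrightarrow> f T \<in> carrier G"
  shows "(\<Oplus>T\<in>Pow S. f T) = (\<Oplus>i\<in>{..card S}. \<Oplus>T\<in>{T. T \<subseteq> S \<and> card T = i}. f T)"
proof -
  have "Pow S = (\<Union>i\<in>{..card S}. {T. T \<subseteq> S \<and> card T = i})"
    using assms(1) by (auto intro: card_mono)
  then show ?thesis
    using assms by (simp only:) (rule add.finprod_UN_disjoint, auto simp: pairwise_def disjnt_def)
qed

lemma (in cring) finprod_minus_eq_elem_sym:
  assumes "finite S" "S \<subseteq> carrier R" "x \<in> carrier R"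
  shows "(\<Otimes>b\<in>S. x \<ominus> b) =
    (\<Oplus>i\<in>{..card S}. ((\<ominus>\<one>) [^] i \<otimes> elem_sym R i S) \<otimes> x [^] (card S - i))"
proof -
  have prod_closed: "(\<Otimes>y\<in>T. y) \<in> carrier R" if "T \<subseteq> S" for T
    using that assms(2) by (intro finprod_closed) auto
  have "(\<Otimes>b\<in>S. x \<ominus> b) = (\<Oplus>i\<in>{..card S}. \<Oplus>T\<in>{T. T \<subseteq> S \<and> card T = i}.
      ((\<ominus>\<one>) [^] card T \<otimes> (\<Otimes>y\<in>T. y)) \<otimes> x [^] (card S - card T))"
    using assms prod_closed by (simp add: finprod_minus_eq_finsum_Pow finsum_Pow_by_card)
  also have "\<dots> = (\<Oplus>i\<in>{..card S}. \<Oplus>T\<in>{T. T \<subseteq> S \<and> card T = i}.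
      ((\<ominus>\<one>) [^] i \<otimes> (\<Otimes>y\<in>T. y)) \<otimes> x [^] (card S - i))"
    using assms(3) prod_closed by (intro finsum_cong') (auto intro!: finsum_cong' finsum_closed)
  also have "\<dots> = (\<Oplus>i\<in>{..card S}. ((\<ominus>\<one>) [^] i \<otimes> elem_sym R i S) \<otimes> x [^] (card S - i))"
    using assms prod_closed
    by (intro finsum_cong') (auto simp: elem_sym_def finsum_ldistr finsum_rdistr Pi_def intro!: finsum_closed)
  finally show ?thesis .
qed

lemma (in ring) eval_eq_finsum:
  assumes "set p \<subseteq> carrier R" "x \<in> carrier R"
  shows "eval p x = (\<Oplus>i\<in>{..<length p}. p ! i \<otimes> x [^] (length p - Suc i))"
  using assms(1)
proof (induction p)
  case Nil
  then show ?case by simp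
next
  case (Cons a p)
  have coeff_closed: "(a # p) ! i \<in> carrier R" if "i < Suc (length p)" for i
    using that Cons.prems by (cases i) (auto simp: subset_iff)
  have "(\<Oplus>i\<in>{..<length (a # p)}. (a # p) ! i \<otimes> x [^] (length (a # p) - Suc i))
      = a \<otimes> x [^] length p \<oplus> (\<Oplus>i\<in>Suc ` {..<length p}. (a # p) ! i \<otimes> x [^] (length p - i))"
    using Cons.prems coeff_closed assms(2)
    by (simp add: lessThan_Suc_eq_insert_0, subst finsum_insert) auto
  also have "\<dots> = a \<otimes> x [^] length p \<oplus> (\<Oplus>i\<in>{..<length p}. p ! i \<otimes> x [^] (length p - Suc i))"
    using coeff_closed assms(2) by (subst finsum_reindex) auto
  finally show ?case
    using Cons by simp
qed

text \<open>Coefficient lists are stored leading coefficient first.\<close>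

definition elem_sym_poly :: "('a, 'b) ring_scheme \<Rightarrow> 'a set \<Rightarrow> 'a list" where
  "elem_sym_poly R S =
     map (\<lambda>i. (\<ominus>\<^bsub>R\<^esub> \<one>\<^bsub>R\<^esub>) [^]\<^bsub>R\<^esub> i \<otimes>\<^bsub>R\<^esub> elem_sym R i S) [0..<Suc (card S)]"

lemma (in cring) eval_elem_sym_poly:
  assumes "finite S" "S \<subseteq> carrier R" "x \<in> carrier R"
  shows "eval (elem_sym_poly R S) x = (\<Otimes>b\<in>S. x \<ominus> b)"
proof -
  define c where "c = (\<lambda>i. (\<ominus>\<one>) [^] i \<otimes> elem_sym R i S)"
  have c_closed: "c i \<in> carrier R" for i
    using elem_sym_closed[OF assms(2)] by (simp add: c_def)
  have "eval (elem_sym_poly R S) x = eval (map c [0..<Suc (card S)]) x"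
    by (simp add: elem_sym_poly_def c_def del: upt_Suc)
  also have "\<dots> = (\<Oplus>i\<in>{..<Suc (card S)}. map c [0..<Suc (card S)] ! i \<otimes> x [^] (card S - i))"
    using c_closed assms(3) by (subst eval_eq_finsum) (auto simp del: upt_Suc)
  also have "\<dots> = (\<Oplus>i\<in>{..card S}. c i \<otimes> x [^] (card S - i))"
    using c_closed assms(3)
    by (intro finsum_cong') (auto simp: lessThan_Suc_atMost simp del: upt_Suc)
  also have "\<dots> = (\<Otimes>b\<in>S. x \<ominus> b)"
    using finprod_minus_eq_elem_sym[OF assms] by (simp add: c_def)
  finally show ?thesis .
qed

lemma (in cring) eval_elem_sym_poly_root:
  assumes "finite S" "S \<subseteq> carrier R" "b \<in> S"
  shows "eval (elem_sym_poly R S) b = \<zero>"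
proof -
  have b: "b \<in> carrier R"
    using assms by auto
  have "(\<Otimes>y\<in>insert b (S - {b}). b \<ominus> y) = (b \<ominus> b) \<otimes> (\<Otimes>y\<in>S - {b}. b \<ominus> y)"
    using assms b by (intro finprod_insert) auto
  moreover have "(\<Otimes>y\<in>S - {b}. b \<ominus> y) \<in> carrier R"
    using assms b by (intro finprod_closed) auto
  ultimately show ?thesis
    using assms b by (simp add: eval_elem_sym_poly insert_absorb r_neg a_minus_def)
qed

lemma (in domain) elem_sym_poly_carrier:
  assumes "subring F R" "finite S" "\<And>i. i \<in> {1..card S} \<Longrightarrow> elem_sym R i S \<in> F"
  shows "elem_sym_poly R S \<in> carrier (F[X])"
proof -
  have sign_closed: "(\<ominus>\<one>) [^] i \<in> F" for i :: nat
    by (induction i) (use subringE[OF assms(1)] in auto)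
  have "elem_sym R i S \<in> F" if "i \<le> card S" for i
    using that assms(3) elem_sym_zero[OF assms(2)] subringE(3)[OF assms(1)]
    by (cases "i = 0") auto
  then have "set (elem_sym_poly R S) \<subseteq> F"
    using sign_closed subringE(6)[OF assms(1)] by (auto simp: elem_sym_poly_def)
  moreover have "hd (elem_sym_poly R S) = \<one>"
    using elem_sym_zero[OF assms(2)] by (simp add: elem_sym_poly_def upt_conv_Cons del: upt_Suc)
  ultimately show ?thesis
    by (simp add: univ_poly_carrier[symmetric] polynomial_def elem_sym_poly_def del: upt_Suc)
qed

section \<open>Automorphisms permute roots\<close>

lemma (in ring) rel_aut_ring_hom_ring:
  fixes \<sigma> :: "'a \<Rightarrow> 'a"
  assumes "subring L R" "\<sigma> \<in> rel_aut R L N"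
  shows "ring_hom_ring (R\<lparr>carrier := L\<rparr>) (R\<lparr>carrier := L\<rparr>) \<sigma>"
  using assms subring_is_ring by (intro ring_hom_ringI2) (auto simp: rel_aut_def)

lemma (in ring) rel_aut_image_roots:
  fixes \<sigma> :: "'a \<Rightarrow> 'a"
  assumes "subring L R" "\<sigma> \<in> rel_aut R L N" "set p \<subseteq> N" "N \<subseteq> L"
    and "finite {\<beta> \<in> L. eval p \<beta> = \<zero>}"
  shows "\<sigma> ` {\<beta> \<in> L. eval p \<beta> = \<zero>} = {\<beta> \<in> L. eval p \<beta> = \<zero>}"
proof (rule endo_inj_surj[OF assms(5)])
  interpret \<sigma>: ring_hom_ring "R\<lparr>carrier := L\<rparr>" "R\<lparr>carrier := L\<rparr>" \<sigma>
    using rel_aut_ring_hom_ring[OF assms(1,2)] .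
  have fixes_p: "map \<sigma> p = p"
    using assms(2,3) by (auto simp: rel_aut_def intro: map_idI)
  have "eval p (\<sigma> \<beta>) = \<sigma> (eval p \<beta>)" if "\<beta> \<in> L" for \<beta>
    using \<sigma>.eval_hom'[of \<beta> p] that assms(3,4) fixes_p by (simp add: eval_consistent[OF assms(1)])
  then show "\<sigma> ` {\<beta> \<in> L. eval p \<beta> = \<zero>} \<subseteq> {\<beta> \<in> L. eval p \<beta> = \<zero>}"
    using \<sigma>.hom_closed \<sigma>.hom_zero by auto
  show "inj_on \<sigma> {\<beta> \<in> L. eval p \<beta> = \<zero>}"
    using assms(2) by (auto simp: rel_aut_def bij_betw_def intro: inj_on_subset)
qed

lemma (in cring) galois_elem_sym_roots_mem:
  assumes "galois_ext R L N" "set p \<subseteq> N" "finite {\<beta> \<in> L. eval p \<beta> = \<zero>}"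
  shows "elem_sym R k {\<beta> \<in> L. eval p \<beta> = \<zero>} \<in> N"
proof -
  define Z where "Z = {\<beta> \<in> L. eval p \<beta> = \<zero>}"
  have L: "subring L R" and NL: "N \<subseteq> L"
    and fixed: "{x \<in> L. \<forall>\<sigma>\<in>rel_aut R L N. \<sigma> x = x} = N"
    using assms(1) subfieldE(1) by (auto simp: galois_ext_def)
  interpret L: cring "R\<lparr>carrier := L\<rparr>"
    using subring_is_cring[OF L] .
  have "elem_sym R k Z \<in> L"
    using L.elem_sym_closed[of Z k] elem_sym_subring[OF L] by (simp add: Z_def)
  moreover have "\<sigma> (elem_sym R k Z) = elem_sym R k Z" if \<sigma>: "\<sigma> \<in> rel_aut R L N" for \<sigma> :: "'a \<Rightarrow> 'a"
  proof -
    interpret \<sigma>: ring_hom_cring "R\<lparr>carrier := L\<rparr>" "R\<lparr>carrier := L\<rparr>" \<sigma>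
      using rel_aut_ring_hom_ring[OF L \<sigma>] L.cring_axioms by (intro RingHom.ring_hom_cringI)
    have "inj_on \<sigma> Z"
      using \<sigma> by (auto simp: rel_aut_def bij_betw_def Z_def intro: inj_on_subset)
    then show ?thesis
      using \<sigma>.hom_elem_sym[of Z k] rel_aut_image_roots[OF L \<sigma> assms(2) NL assms(3)]
      by (simp add: elem_sym_subring[OF L] Z_def)
  qed
  ultimately show ?thesis
    using fixed by (auto simp: Z_def)
qed

section \<open>Degrees of intermediate fields\<close>

lemma (in ring) algebraic_of_root:
  assumes "p \<in> carrier (F[X])" "p \<noteq> []" "eval p x = \<zero>"
  shows "(algebraic over F) x"
  using eval_transcendental[of F x p] assms unfolding over_def by blast

lemma (in domain) dim_simple_extension_le_degree:
  assumes "subfield F R" "x \<in> carrier R" "p \<in> carrier (F[X])" "p \<noteq> []" "eval p x = \<zero>"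
  shows "finite_dimension F (simple_extension F x)" "dim F (simple_extension F x) \<le> degree p"
proof -
  have alg: "(algebraic over F) x"
    using algebraic_of_root[OF assms(3-5)] .
  then show "finite_dimension F (simple_extension F x)"
    using finite_dimension_simple_extension[OF assms(1,2)] by simp
  have "degree (Irr F x) \<le> degree p"
    using pdivides_imp_degree_le[OF subfieldE(1)[OF assms(1)] IrrE(1)[OF assms(1,2) alg] assms(3,4)]
      Irr_minimal[OF assms(1,2) alg assms(3,5)] by simp
  then show "dim F (simple_extension F x) \<le> degree p"
    using simple_extension_dim[OF assms(1,2) alg] by (simp add: over_def)
qed

lemma (in field) adjoin_eq_simple_extension:
  assumes "subfield K R" "subfield F R" "K \<subseteq> F" "F \<subseteq> adjoin R K {x}"
    and "x \<in> carrier R" "(algebraic over F) x"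
  shows "adjoin R K {x} = simple_extension F x"
proof
  have K: "K \<subseteq> carrier R"
    using subfieldE(3)[OF assms(1)] .
  have "subfield (adjoin R K {x}) R"
    unfolding adjoin_def using K assms(5) by (intro generate_field_is_subfield) auto
  moreover have "x \<in> adjoin R K {x}"
    unfolding adjoin_def by (auto intro: generate_field.incl)
  ultimately show "simple_extension F x \<subseteq> adjoin R K {x}"
    using simple_extension_subring_incl subfieldE(1) assms(4) by blast
  have "subfield (simple_extension F x) R"
    using simple_extension_is_subfield[OF assms(2,5)] assms(6) by simp
  moreover have "K \<subseteq> simple_extension F x"
    using assms(3) simple_extension_incl[OF subfieldE(3)[OF assms(2)] assms(5)] by auto
  moreover have "x \<in> simple_extension F x"
    using simple_extension_mem[OF subfieldE(1)[OF assms(2)] assms(5)] .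
  ultimately show "adjoin R K {x} \<subseteq> simple_extension F x"
    unfolding adjoin_def using K assms(5) by (intro generate_field_min_subfield1) auto
qed

lemma (in field) dim_pos:
  assumes "subfield N R" "N \<subseteq> L" "finite_dimension N L"
  shows "0 < dim N L"
proof (rule ccontr)
  assume "\<not> 0 < dim N L"
  then have "L = {\<zero>}"
    using dimension_zero[OF assms(1)] finite_dimensionE[OF assms(1,3)] by (simp add: over_def)
  then show False
    using assms(2) subringE(3)[OF subfieldE(1)[OF assms(1)]] by auto
qed

lemma (in field) intermediate_field_eq_of_dim_le:
  assumes "subfield F R" "subfield N R" "F \<subseteq> N" "N \<subseteq> L"
    and "finite_dimension F L" "finite_dimension N L" "dim F L \<le> dim N L"
  shows "N = F"
proof -
  have N: "subring N R"
    using subfieldE(1)[OF assms(2)] .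
  have "subalgebra F N R"
    using assms(3) subring.axioms(1)[OF N] subringE(6)[OF N]
    by (auto simp: subalgebra_def subalgebra_axioms_def)
  then have finFN: "finite_dimension F N"
    using subalbegra_incl_imp_finite_dimension[OF assms(1,5)] assms(4) by blast
  have "dim F L = dim F N * dim N L"
    using telescopic_base_dim(2)[OF assms(1,2) finFN assms(6)] by (simp add: over_def)
  then have "dim F N \<le> 1"
    using assms(7) dim_pos[OF assms(2,4,6)] by (simp add: mult_le_cancel2)
  moreover have "0 < dim F N"
    using dim_pos[OF assms(1,3) finFN] .
  ultimately have "dim F N = 1"
    by linarith
  then have "dimension 1 F N"
    using finite_dimensionE[OF assms(1) finFN] by (simp add: over_def)
  moreover have "independent F [\<one>]"
    by (rule li_Cons) auto
  ultimately have "Span F [\<one>] = N"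
    using independent_length_eq_dimension[OF assms(1), of 1 N "[\<one>]"] subringE(3)[OF N] by simp
  moreover have "Span F [\<one>] = F"
    using independent_length_eq_dimension[OF assms(1) dimension_one[OF assms(1)] \<open>independent F [\<one>]\<close>]
      subringE(3)[OF subfieldE(1)[OF assms(1)]] by simp
  ultimately show ?thesis
    by simp
qed

lemma (in field) dim_adjoin_le_card_roots:
  assumes "subfield K R" "subfield F R" "K \<subseteq> F" "F \<subseteq> adjoin R K {\<alpha>}"
    and "finite Z" "Z \<subseteq> carrier R" "\<alpha> \<in> Z" "\<And>i. i \<in> {1..card Z} \<Longrightarrow> elem_sym R i Z \<in> F"
  shows "finite_dimension F (adjoin R K {\<alpha>})" "dim F (adjoin R K {\<alpha>}) \<le> card Z"
proof -
  have \<alpha>: "\<alpha> \<in> carrier R"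
    using assms(6,7) by auto
  have p: "elem_sym_poly R Z \<in> carrier (F[X])" "elem_sym_poly R Z \<noteq> []"
    and root: "eval (elem_sym_poly R Z) \<alpha> = \<zero>"
    using elem_sym_poly_carrier[OF subfieldE(1)[OF assms(2)] assms(5,8)]
      eval_elem_sym_poly_root[OF assms(5-7)] by (auto simp: elem_sym_poly_def)
  have "adjoin R K {\<alpha>} = simple_extension F \<alpha>"
    using adjoin_eq_simple_extension[OF assms(1-4) \<alpha> algebraic_of_root[OF p root]] .
  then show "finite_dimension F (adjoin R K {\<alpha>})" "dim F (adjoin R K {\<alpha>}) \<le> card Z"
    using dim_simple_extension_le_degree[OF assms(2) \<alpha> p root] by (simp_all add: elem_sym_poly_def)
qed

lemma (in field) galois_subfield_eq_adjoin_elem_sym_roots: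
  fixes K L N :: "'a set" and p :: "'a list" and \<alpha> :: 'a
  defines "Z \<equiv> {\<beta> \<in> L. eval p \<beta> = \<zero>}"
  assumes K: "subfield K R" and KN: "K \<subseteq> N" and gal: "galois_ext R L N"
    and L_eq: "L = adjoin R K {\<alpha>}" and p: "set p \<subseteq> K" "eval p \<alpha> = \<zero>"
    and dim_NL: "dim N L = card Z"
  shows "N = adjoin R K ((\<lambda>k. elem_sym R k Z) ` {1..card Z})"
proof -
  define F where "F = adjoin R K ((\<lambda>k. elem_sym R k Z) ` {1..card Z})"
  have L: "subfield L R" and N: "subfield N R" "N \<subseteq> L" and fin_NL: "finite_dimension N L"
    using gal by (auto simp: galois_ext_def)
  have Z: "finite Z"
    using dim_pos[OF N fin_NL] dim_NL card_ge_0_finite by simp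
  have Z_N: "elem_sym R k Z \<in> N" for k
    using galois_elem_sym_roots_mem[OF gal] KN p(1) Z by (auto simp: Z_def)
  have Z_L: "Z \<subseteq> L" "\<alpha> \<in> Z"
    using L_eq p(2) by (auto simp: Z_def adjoin_def intro: generate_field.incl)
  have gen: "K \<union> (\<lambda>k. elem_sym R k Z) ` {1..card Z} \<subseteq> carrier R"
    using subfieldE(3)[OF K] subfieldE(3)[OF N(1)] Z_N by blast
  have F: "subfield F R" "K \<subseteq> F" "F \<subseteq> N"
    unfolding F_def adjoin_def
    using generate_field_is_subfield[OF gen] generate_field_min_subfield1[OF gen N(1)] KN Z_N
    by (auto intro: generate_field.incl)
  have F_gen: "elem_sym R i Z \<in> F" if "i \<in> {1..card Z}" for i
    using that unfolding F_def adjoin_def by (auto intro: generate_field.incl)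
  have "finite_dimension F L" "dim F L \<le> dim N L"
    using dim_adjoin_le_card_roots[OF K F(1,2) _ Z _ Z_L(2) F_gen] F(3) N(2) Z_L(1)
      subfieldE(3)[OF L] dim_NL
    by (auto simp: L_eq[symmetric])
  then show ?thesis
    using intermediate_field_eq_of_dim_le[OF F(1) N(1) F(3) N(2) _ fin_NL] by (simp add: F_def)
qed

theorem proposition7p4:
  fixes R :: "('a, 'b) ring_scheme" and K L N :: "'a set" and \<alpha> :: 'a
  assumes "algebraic_closure R K"
    and "perfect_subfield R K"
    and "\<alpha> \<in> carrier R"
    and "ring.algebraic R K \<alpha>"
    and "L = adjoin R K {\<alpha>}"
    and "L \<noteq> K"
    and "subfield N R" and "K \<subseteq> N" and "N \<subseteq> L"
    and "galois_ext R L N"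
    and "ring.dim R N L = card (roots_in R K \<alpha> L)"
  shows "N = adjoin R K ((\<lambda>k. elem_sym R k (roots_in R K \<alpha> L)) ` {1..card (roots_in R K \<alpha> L)})"
proof -
  interpret field R
    using assms(1) by (simp add: algebraic_closure_def)
  have K: "subfield K R"
    using assms(1) by (simp add: algebraic_closure_def)
  have "set (Irr K \<alpha>) \<subseteq> K" "eval (Irr K \<alpha>) \<alpha> = \<zero>\<^bsub>R\<^esub>"
    using IrrE[OF K assms(3)] assms(4) polynomial_incl
    by (auto simp: over_def univ_poly_carrier[symmetric])
  then show ?thesis
    using galois_subfield_eq_adjoin_elem_sym_roots[OF K assms(8,10,5)] assms(11)
    by (simp add: roots_in_def)
qed

end
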